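(* Let $R$ be a ring and $G$ a group such that the group ring $RG$ is a DT ring and $2\in\Delta(R)$. Then $G$ is a $2$-group.
   Context: All rings are associative with identity; $U(R)$ is the group of units. $\Delta(R)=\{x\in R: x+u\in U(R)\text{ for all }u\in U(R)\}$. $\mathrm{Tr}(R)=\{x\in R: x^3=x\}$. A ring $R$ is a DT ring if every $r\in R$ can be written $r=e+d$ with $e\in\mathrm{Tr}(R)$ and $d\in\Delta(R)$. $RG$ denotes the group ring. *)

theory Defs
  imports "HOL-Library.Poly_Mapping"
begin

definition units_of_ring :: "'a::ring_1 set" where
  "units_of_ring = {u. \<exists>v. u * v = 1 \<and> v * u = 1}"

definition Delta :: "'a::ring_1 set" where
  "Delta = {x. \<forall>u \<in> units_of_ring. x + u \<in> units_of_ring}"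

definition Tr :: "'a::ring_1 set" where
  "Tr = {x. x ^ 3 = x}"

definition DT_ring :: "'a::ring_1 itself \<Rightarrow> bool" where
  "DT_ring _ \<longleftrightarrow> (\<forall>r::'a. \<exists>e d. r = e + d \<and> e \<in> Tr \<and> d \<in> Delta)"

text \<open>The group ring RG is modelled as the ring of finitely supported functions
  g =>0 r (finitely supported functions) with convolution product; the group G is written additively
  (class group_add, not necessarily commutative).\<close>

definition gpow :: "'g::group_add \<Rightarrow> nat \<Rightarrow> 'g" where
  "gpow g n = ((\<lambda>x. g + x) ^^ n) 0"

definition two_group :: "'g::group_add itself \<Rightarrow> bool" where
  "two_group _ \<longleftrightarrow> (\<forall>g::'g. \<exists>k. gpow g (2 ^ k) = 0)"

end

theory Submission
  imports Defs
begin

(* In a DT ring every unit u satisfies u^2 - 1 in Delta: if u = e + d with e^3 = e and d in Delta,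
   then e = u - d is a unit, hence e^2 = 1, and u^2 - 1 = b + (1 + b) a with a = e d, b = e a e.
   As 2 lies in Delta(R), odd integers are units of RG.  If g has odd order m, then
   s = sum_{i<m} g^(2i) = m + sum_{i<m} (g^(2i) - 1) is a unit with (1 - g^2) s = 1 - g^(2m) = 0,
   so g^2 = 1; passing from g to g^2 while the order is even, every torsion element has 2-power order.
   An element a of infinite order is excluded because 1 + a^2 + a^4 = 3 + (a^2 - 1) + (a^4 - 1)
   would be a unit, whereas for b = a^2 the coefficients of an inverse of 1 + b + b^2 along the
   powers of b would be a finitely supported f : Z -> R with f n + f (n-1) + f (n-2) = [n = 0],
   but the least point of its support would be 0 and the greatest -2. *)

lemma units_of_ring_mult:
  "u \<in> units_of_ring \<Longrightarrow> v \<in> units_of_ring \<Longrightarrow> (u * v :: 'a::ring_1) \<in> units_of_ring"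
  unfolding units_of_ring_def
proof clarify
  fix u' v' :: 'a
  assume "u * u' = 1" "u' * u = 1" "v * v' = 1" "v' * v = 1"
  moreover have "u * v * (v' * u') = u * (v * v') * u'" "v' * u' * (u * v) = v' * (u' * u) * v"
    by (simp_all add: mult.assoc)
  ultimately show "\<exists>w. u * v * w = 1 \<and> w * (u * v) = 1" by (intro exI[of _ "v' * u'"]) simp
qed

lemma units_of_ring_uminus: "u \<in> units_of_ring \<Longrightarrow> (- u :: 'a::ring_1) \<in> units_of_ring"
  unfolding units_of_ring_def by (auto intro: exI[of _ "- v" for v])

lemma one_in_units_of_ring: "(1 :: 'a::ring_1) \<in> units_of_ring"
  unfolding units_of_ring_def by auto

lemma Delta_add_unit: "d \<in> Delta \<Longrightarrow> u \<in> units_of_ring \<Longrightarrow> (d + u :: 'a::ring_1) \<in> units_of_ring"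
  unfolding Delta_def by auto

lemma zero_in_Delta: "(0 :: 'a::ring_1) \<in> Delta"
  unfolding Delta_def by auto

lemma Delta_uminus:
  assumes "(d :: 'a::ring_1) \<in> Delta"
  shows "- d \<in> Delta"
  unfolding Delta_def
proof clarify
  fix u :: 'a
  assume "u \<in> units_of_ring"
  then have "- (d + - u) \<in> units_of_ring"
    using assms by (blast intro: units_of_ring_uminus Delta_add_unit)
  then show "- d + u \<in> units_of_ring" by simp
qed

lemma Delta_add: "(d :: 'a::ring_1) \<in> Delta \<Longrightarrow> e \<in> Delta \<Longrightarrow> d + e \<in> Delta"
  unfolding Delta_def by (simp add: add.assoc)

lemma Delta_sum: "(\<And>i. i \<in> I \<Longrightarrow> (h i :: 'a::ring_1) \<in> Delta) \<Longrightarrow> (\<Sum>i\<in>I. h i) \<in> Delta"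
  by (induction I rule: infinite_finite_induct) (simp_all add: zero_in_Delta Delta_add)

lemma Delta_mult_unit_left:
  assumes d: "(d :: 'a::ring_1) \<in> Delta" and e: "e \<in> units_of_ring"
  shows "e * d \<in> Delta"
  unfolding Delta_def
proof clarify
  fix u :: 'a
  assume u: "u \<in> units_of_ring"
  obtain e' where e': "e * e' = 1" "e' * e = 1" using e unfolding units_of_ring_def by blast
  then have "e' \<in> units_of_ring" unfolding units_of_ring_def by blast
  then have "e * (d + e' * u) \<in> units_of_ring"
    using d e u by (blast intro: units_of_ring_mult Delta_add_unit)
  moreover have "e * (d + e' * u) = e * d + u" by (simp add: distrib_left e'(1) flip: mult.assoc)
  ultimately show "e * d + u \<in> units_of_ring" by simp
qed

lemma Delta_mult_unit_right:
  assumes d: "(d :: 'a::ring_1) \<in> Delta" and e: "e \<in> units_of_ring"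
  shows "d * e \<in> Delta"
  unfolding Delta_def
proof clarify
  fix u :: 'a
  assume u: "u \<in> units_of_ring"
  obtain e' where e': "e * e' = 1" "e' * e = 1" using e unfolding units_of_ring_def by blast
  then have "e' \<in> units_of_ring" unfolding units_of_ring_def by blast
  then have "(d + u * e') * e \<in> units_of_ring"
    using d e u by (blast intro: units_of_ring_mult Delta_add_unit)
  moreover have "(d + u * e') * e = d * e + u" by (simp add: distrib_right e'(2) mult.assoc)
  ultimately show "d * e + u \<in> units_of_ring" by simp
qed

lemma tripotent_unit_square:
  assumes "(e :: 'a::ring_1) \<in> Tr" and "e \<in> units_of_ring"
  shows "e * e = 1"
proof -
  obtain e' where e': "e' * e = 1" using assms(2) unfolding units_of_ring_def by blast
  have "e' * e * (e * e) = e' * e"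
    using assms(1) unfolding Tr_def by (simp add: power3_eq_cube mult.assoc)
  then show ?thesis using e' by simp
qed

lemma DT_ring_unit_square_minus_one:
  assumes DT: "DT_ring TYPE('a::ring_1)" and u: "(u :: 'a) \<in> units_of_ring"
  shows "u ^ 2 - 1 \<in> Delta"
proof -
  obtain e d where ed: "u = e + d" "e \<in> Tr" "(d :: 'a) \<in> Delta"
    using DT unfolding DT_ring_def by blast
  have e_unit: "e \<in> units_of_ring"
    using Delta_add_unit[OF Delta_uminus[OF ed(3)] u] ed(1) by (simp add: add.commute)
  have ee: "e * e = 1" using tripotent_unit_square ed(2) e_unit .
  define a where "a = e * d"
  define b where "b = e * a * e"
  have a: "a \<in> Delta" unfolding a_def using Delta_mult_unit_left ed(3) e_unit .
  have b: "b \<in> Delta" unfolding b_def using Delta_mult_unit_left Delta_mult_unit_right a e_unit by blast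
  have "u = e * (1 + a)" unfolding a_def using ee ed(1) by (simp add: distrib_left flip: mult.assoc)
  then have "u ^ 2 = (e * (1 + a) * e) * (1 + a)" by (simp add: power2_eq_square mult.assoc)
  also have "e * (1 + a) * e = 1 + b" unfolding b_def using ee by (simp add: distrib_left distrib_right)
  finally have "u ^ 2 - 1 = b + (1 + b) * a" by (simp add: algebra_simps)
  moreover have "1 + b \<in> units_of_ring"
    using Delta_add_unit[OF b one_in_units_of_ring] by (simp add: add.commute)
  ultimately show ?thesis using Delta_add[OF b Delta_mult_unit_left[OF a]] by simp
qed

lemma units_of_ring_power: "(u :: 'a::ring_1) \<in> units_of_ring \<Longrightarrow> u ^ n \<in> units_of_ring"
  by (induction n) (simp_all add: one_in_units_of_ring units_of_ring_mult)

lemma of_nat_odd_in_units_of_ring: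
  assumes two: "(2 :: 'a::ring_1) \<in> Delta" and "odd m"
  shows "(of_nat m :: 'a) \<in> units_of_ring"
proof -
  obtain j where m: "m = Suc (2 * j)" using \<open>odd m\<close> by (metis oddE Suc_eq_plus1)
  have "(\<Sum>i<j. 2 :: 'a) \<in> Delta" using two by (rule Delta_sum)
  then have "(\<Sum>i<j. 2 :: 'a) + 1 \<in> units_of_ring" using Delta_add_unit one_in_units_of_ring by blast
  then show ?thesis unfolding m by (simp add: add.commute mult.commute)
qed

lemma one_minus_mult_sum_power: "(1 - x) * (\<Sum>i<m. x ^ i) = 1 - (x :: 'a::ring_1) ^ m"
proof (induction m)
  case (Suc m)
  have "(1 - x) * (\<Sum>i<Suc m. x ^ i) = (1 - x) * (\<Sum>i<m. x ^ i) + (1 - x) * x ^ m"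
    by (simp add: distrib_left)
  also have "\<dots> = 1 - x ^ Suc m" using Suc by (simp add: algebra_simps flip: power_Suc)
  finally show ?case .
qed simp

lemma DT_ring_unit_square_eq_one:
  assumes DT: "DT_ring TYPE('a::ring_1)" and m: "(of_nat m :: 'a) \<in> units_of_ring"
    and t: "t \<in> units_of_ring" and "(t :: 'a) ^ m = 1"
  shows "t ^ 2 = 1"
proof -
  define s where "s = (\<Sum>i<m. (t ^ 2) ^ i)"
  have "s = (\<Sum>i<m. (t ^ i) ^ 2 - 1) + of_nat m"
    unfolding s_def by (simp add: sum_subtractf mult.commute flip: power_mult)
  moreover have "(\<Sum>i<m. (t ^ i) ^ 2 - 1) \<in> Delta"
    using DT_ring_unit_square_minus_one[OF DT units_of_ring_power[OF t]] by (rule Delta_sum)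
  ultimately have "s \<in> units_of_ring" using Delta_add_unit m by simp
  then obtain s' where s': "s * s' = 1" unfolding units_of_ring_def by blast
  have "(t ^ 2) ^ m = 1" using \<open>t ^ m = 1\<close> by (metis power_mult mult.commute power_one)
  then have "(1 - t ^ 2) * s = 0" unfolding s_def one_minus_mult_sum_power by simp
  then have "1 - t ^ 2 = 0" by (metis s' mult.assoc mult_1_right mult_zero_left)
  then show ?thesis by simp
qed

lemma DT_ring_one_plus_square_plus_fourth_power_unit:
  assumes DT: "DT_ring TYPE('a::ring_1)" and "(3 :: 'a) \<in> units_of_ring"
    and x: "x \<in> units_of_ring"
  shows "1 + x ^ 2 + (x ^ 2) ^ 2 \<in> (units_of_ring :: 'a set)"
proof -
  have "(x ^ 2 - 1) + ((x ^ 2) ^ 2 - 1) \<in> Delta"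
    using DT_ring_unit_square_minus_one[OF DT] x units_of_ring_power by (blast intro: Delta_add)
  from Delta_add_unit[OF this \<open>3 \<in> units_of_ring\<close>]
  have "(x ^ 2 - 1) + ((x ^ 2) ^ 2 - 1) + 3 \<in> units_of_ring" .
  moreover have "(x ^ 2 - 1) + ((x ^ 2) ^ 2 - 1) + 3 = 1 + x ^ 2 + (x ^ 2) ^ 2"
    by (simp add: algebra_simps)
  ultimately show ?thesis by metis
qed

lemma gpow_0 [simp]: "gpow g 0 = 0"
  by (simp add: gpow_def)

lemma gpow_Suc [simp]: "gpow g (Suc n) = g + gpow g n"
  by (simp add: gpow_def)

lemma gpow_add: "gpow (g :: 'g::group_add) (m + n) = gpow g m + gpow g n"
  by (induction m) (simp_all add: add.assoc)

lemma gpow_mult: "gpow (g :: 'g::group_add) (m * n) = gpow (gpow g m) n"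
  by (induction n) (simp_all add: gpow_add)

lemma single_one_power:
  "Poly_Mapping.single (g :: 'g::group_add) (1 :: 'r::ring_1) ^ n = Poly_Mapping.single (gpow g n) 1"
  by (induction n) (simp_all add: mult_single)

lemma single_one_in_units_of_ring:
  "Poly_Mapping.single (g :: 'g::group_add) (1 :: 'r::ring_1) \<in> units_of_ring"
  unfolding units_of_ring_def by (auto intro: exI[of _ "Poly_Mapping.single (- g) 1"] simp: mult_single)

lemma single_zero_in_units_of_ring:
  assumes "(r :: 'r::ring_1) \<in> units_of_ring"
  shows "Poly_Mapping.single (0 :: 'g::group_add) r \<in> units_of_ring"
proof -
  obtain s where "r * s = 1" "s * r = 1" using assms unfolding units_of_ring_def by blast
  then show ?thesis
    unfolding units_of_ring_def by (auto intro: exI[of _ "Poly_Mapping.single 0 s"] simp: mult_single)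
qed

lemma group_ring_of_nat_odd_in_units_of_ring:
  assumes "(2 :: 'r::ring_1) \<in> Delta" and "odd m"
  shows "(of_nat m :: 'g::group_add \<Rightarrow>\<^sub>0 'r) \<in> units_of_ring"
  using single_zero_in_units_of_ring[OF of_nat_odd_in_units_of_ring[OF assms]] by simp

lemma single_one_eq_one_iff:
  "Poly_Mapping.single (g :: 'g::group_add) (1 :: 'r::ring_1) = 1 \<longleftrightarrow> g = 0"
proof
  assume "Poly_Mapping.single g (1 :: 'r) = 1"
  then have "Poly_Mapping.lookup (Poly_Mapping.single g (1 :: 'r)) 0 \<noteq> 0" by simp
  then show "g = 0" by (metis lookup_single_not_eq)
qed simp

lemma lookup_single_one_mult:
  "Poly_Mapping.lookup (Poly_Mapping.single (a :: 'g::group_add) (1 :: 'r::ring_1) * w) k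
     = Poly_Mapping.lookup w (- a + k)"
proof -
  have "Poly_Mapping.lookup (Poly_Mapping.single a (1 :: 'r) * w) k
      = (\<Sum>q. Poly_Mapping.lookup w q when k = a + q)"
    by (simp add: lookup_mult lookup_single when_mult)
  also have "\<dots> = (\<Sum>q. Poly_Mapping.lookup w q when q = - a + k)"
    by (rule Sum_any.cong, rule when_cong) (auto simp: add.assoc)
  finally show ?thesis by simp
qed

lemma DT_group_ring_two_power_order:
  assumes DT: "DT_ring TYPE('g::group_add \<Rightarrow>\<^sub>0 'r::ring_1)" and two: "(2 :: 'r) \<in> Delta"
    and "0 < n" and "gpow (g :: 'g) n = 0"
  shows "\<exists>k. gpow g (2 ^ k) = 0"
  using assms(3,4)
proof (induction n arbitrary: g rule: less_induct)
  case (less n)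
  show ?case
  proof (cases "even n")
    case True
    then obtain n' where n: "n = 2 * n'" by blast
    with less.prems have "n' < n" "0 < n'" "gpow (gpow g 2) n' = 0" by (simp_all flip: gpow_mult)
    then obtain k where "gpow (gpow g 2) (2 ^ k) = 0" using less.IH by blast
    then have "gpow g (2 ^ Suc k) = 0" by (simp flip: gpow_mult)
    then show ?thesis by blast
  next
    case False
    let ?X = "Poly_Mapping.single g (1 :: 'r)"
    have "?X ^ n = 1" using less.prems by (simp add: single_one_power)
    then have "?X ^ 2 = 1"
      using DT_ring_unit_square_eq_one[OF DT group_ring_of_nat_odd_in_units_of_ring[OF two False]]
        single_one_in_units_of_ring by blast
    then have "gpow g (2 ^ 1) = 0" by (simp add: single_one_power single_one_eq_one_iff)
    then show ?thesis by blast
  qed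
qed

definition gpow_int :: "'g::group_add \<Rightarrow> int \<Rightarrow> 'g" where
  "gpow_int a n = (if 0 \<le> n then gpow a (nat n) else gpow (- a) (nat (- n)))"

lemma gpow_int_0 [simp]: "gpow_int a 0 = 0"
  by (simp add: gpow_int_def)

lemma gpow_int_succ: "gpow_int a (n + 1) = a + gpow_int a n"
proof (cases "0 \<le> n")
  case True
  then have "nat (n + 1) = Suc (nat n)" by simp
  with True show ?thesis by (simp add: gpow_int_def)
next
  case False
  define k where "k = nat (- n - 1)"
  have n: "n = - int (Suc k)" using False by (simp add: k_def)
  then have "gpow_int a n = - a + gpow (- a) k" by (simp add: gpow_int_def nat_add_distrib)
  moreover have "gpow_int a (n + 1) = gpow (- a) k" using n by (simp add: gpow_int_def)
  ultimately show ?thesis by (simp add: add.assoc[symmetric])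
qed

lemma gpow_int_pred: "gpow_int a (n - 1) = - a + gpow_int a n"
  using gpow_int_succ[of a "n - 1"] by (simp add: minus_add_cancel)

lemma gpow_int_add_nat: "gpow_int a (n + int k) = gpow a k + gpow_int a n"
proof (induction k)
  case (Suc k)
  have "gpow_int a (n + int (Suc k)) = gpow_int a ((n + int k) + 1)" by (simp add: ac_simps)
  also have "\<dots> = a + gpow_int a (n + int k)" by (rule gpow_int_succ)
  finally show ?case by (simp add: Suc add.assoc)
qed simp

lemma inj_gpow_int:
  assumes "\<And>n. 0 < n \<Longrightarrow> gpow (a :: 'g::group_add) n \<noteq> 0"
  shows "inj (gpow_int a)"
proof (rule linorder_injI)
  fix m n :: int
  assume "m < n"
  then obtain k where n: "n = m + int k" and "0 < k" by (metis zless_iff_Suc_zadd zero_less_Suc)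
  then have "gpow_int a n = gpow a k + gpow_int a m" by (simp add: gpow_int_add_nat)
  then show "gpow_int a m \<noteq> gpow_int a n"
    using assms[OF \<open>0 < k\<close>] by (metis add.left_neutral add_right_cancel)
qed

lemma three_term_recurrence_infinite_support:
  fixes f :: "int \<Rightarrow> 'r::ring_1"
  assumes rec: "\<And>n. f n + f (n - 1) + f (n - 2) = (if n = 0 then 1 else 0)"
  shows "infinite {n. f n \<noteq> 0}"
proof
  let ?S = "{n. f n \<noteq> 0}"
  assume fin: "finite ?S"
  have "?S \<noteq> {}"
  proof
    assume "?S = {}"
    then show False using rec[of 0] by simp
  qed
  define M where "M = Min ?S"
  define N where "N = Max ?S"
  have "f M \<noteq> 0" "f N \<noteq> 0" "M \<le> N"
    using Min_in Max_in Min_le fin \<open>?S \<noteq> {}\<close> unfolding M_def N_def by auto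
  have below: "f n = 0" if "n < M" for n
    using that Min_le[OF fin, of n] unfolding M_def by auto
  have above: "f n = 0" if "N < n" for n
    using that Max_ge[OF fin, of n] unfolding N_def by auto
  have "f M = (if M = 0 then 1 else 0)" using rec[of M] below[of "M - 1"] below[of "M - 2"] by simp
  then have "M = 0" using \<open>f M \<noteq> 0\<close> by (simp split: if_splits)
  have "f N = (if N + 2 = 0 then 1 else 0)" using rec[of "N + 2"] above[of "N + 2"] above[of "N + 2 - 1"] by simp
  then have "N = - 2" using \<open>f N \<noteq> 0\<close> by (simp split: if_splits)
  with \<open>M = 0\<close> \<open>M \<le> N\<close> show False by simp
qed

lemma one_plus_single_plus_square_not_unit:
  assumes a: "\<And>n. 0 < n \<Longrightarrow> gpow (a :: 'g::group_add) n \<noteq> 0"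
  shows "1 + Poly_Mapping.single a 1 + Poly_Mapping.single a 1 ^ 2 \<notin> (units_of_ring :: ('g \<Rightarrow>\<^sub>0 'r::ring_1) set)"
proof
  let ?Y = "Poly_Mapping.single a (1 :: 'r)"
  assume "1 + ?Y + ?Y ^ 2 \<in> units_of_ring"
  then obtain w where w: "(1 + ?Y + ?Y ^ 2) * w = 1" unfolding units_of_ring_def by blast
  define f where "f n = Poly_Mapping.lookup w (gpow_int a n)" for n
  have inj: "inj (gpow_int a)" using inj_gpow_int a .
  have "finite {n. f n \<noteq> 0}"
  proof -
    have "{n. f n \<noteq> 0} = gpow_int a -` {k. Poly_Mapping.lookup w k \<noteq> 0}" unfolding f_def by auto
    then show ?thesis using finite_vimageI[OF finite_lookup inj] by simp
  qed
  moreover have "f n + f (n - 1) + f (n - 2) = (if n = 0 then 1 else 0)" for n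
  proof -
    have "f n + f (n - 1) + f (n - 2)
        = Poly_Mapping.lookup w (gpow_int a n) + Poly_Mapping.lookup w (- a + gpow_int a n)
          + Poly_Mapping.lookup w (- a + (- a + gpow_int a n))"
      by (simp add: f_def flip: gpow_int_pred)
    also have "\<dots> = Poly_Mapping.lookup ((1 + ?Y + ?Y ^ 2) * w) (gpow_int a n)"
      by (simp add: distrib_right power2_eq_square mult.assoc lookup_add lookup_single_one_mult)
    also have "\<dots> = Poly_Mapping.lookup 1 (gpow_int a n)" by (simp only: w)
    also have "\<dots> = (if n = 0 then 1 else 0)"
      using injD[OF inj, of n 0] by (auto simp: lookup_one when_def)
    finally show ?thesis .
  qed
  ultimately show False using three_term_recurrence_infinite_support by blast
qed

lemma DT_group_ring_torsion:
  assumes DT: "DT_ring TYPE('g::group_add \<Rightarrow>\<^sub>0 'r::ring_1)" and two: "(2 :: 'r) \<in> Delta"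
  shows "\<exists>n > 0. gpow (g :: 'g) n = 0"
proof (rule ccontr)
  assume "\<not> ?thesis"
  then have no_torsion: "gpow g n \<noteq> 0" if "0 < n" for n using that by blast
  have "gpow (gpow g 2) n \<noteq> 0" if "0 < n" for n
    using no_torsion[of "2 * n"] that by (simp flip: gpow_mult)
  then have not_unit:
    "1 + Poly_Mapping.single (gpow g 2) 1 + Poly_Mapping.single (gpow g 2) 1 ^ 2 \<notin> (units_of_ring :: ('g \<Rightarrow>\<^sub>0 'r) set)"
    by (rule one_plus_single_plus_square_not_unit)
  have "(3 :: 'g \<Rightarrow>\<^sub>0 'r) \<in> units_of_ring"
    using group_ring_of_nat_odd_in_units_of_ring[OF two, of 3] by simp
  from DT_ring_one_plus_square_plus_fourth_power_unit[OF DT this single_one_in_units_of_ring]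
  show False using not_unit by (simp add: single_one_power)
qed

theorem theorem3p10:
  assumes "DT_ring TYPE('g::group_add \<Rightarrow>\<^sub>0 'r::ring_1)"
    and "(2::'r) \<in> Delta"
  shows "two_group TYPE('g)"
  unfolding two_group_def
proof
  fix g :: 'g
  obtain n where "0 < n" "gpow g n = 0" using DT_group_ring_torsion[OF assms] by blast
  then show "\<exists>k. gpow g (2 ^ k) = 0" by (rule DT_group_ring_two_power_order[OF assms])
qed

end
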